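(* Let $G$ be a finite Coxeter group with Coxeter generators $s_1,\dots,s_n$ and Coxeter matrix $(m_{i,j})$, acting on a set $S$. Suppose $v_1,\dots,v_n\in S$ satisfy: (1) if $m_{i,j}=2k+1$ then $[s_is_j\cdots]_{2k}(v_i)=v_j$; (2) if $m_{i,j}=2k$ then $[s_is_j\cdots]_{2k-1}(v_j)=v_j$; (3) if $m_{i,j}=2$ then $s_i(v_j)=v_j$; (4) $s_i(v_i)=v_i$ for all $i$. Then for all $w\in G$ and all $i,j$, $ws_iw^{-1}=s_j$ implies $w(v_i)=v_j$.
   Context: $[s_is_j\cdots]_k$ denotes the word of length $k$ beginning with $s_i$ in which $s_i$ and $s_j$ alternate. The Coxeter group has presentation $\langle s_1,\dots,s_n\mid s_i^2=1,\ [s_is_j\cdots]_{m_{i,j}}=[s_js_i\cdots]_{m_{i,j}}\ (i\ne j)\rangle$. *)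

theory Defs
  imports "HOL-Algebra.Group_Action"
begin

text \<open>Indices of the Coxeter generators are 0..<n (instead of 1..n).\<close>

fun alt_word :: "nat \<Rightarrow> nat \<Rightarrow> nat \<Rightarrow> nat list" where
  "alt_word i j 0 = []"
| "alt_word i j (Suc k) = i # alt_word j i k"

fun word_eval :: "('a, 'c) monoid_scheme \<Rightarrow> (nat \<Rightarrow> 'a) \<Rightarrow> nat list \<Rightarrow> 'a" where
  "word_eval G s [] = \<one>\<^bsub>G\<^esub>"
| "word_eval G s (i # w) = s i \<otimes>\<^bsub>G\<^esub> word_eval G s w"

definition coxeter_matrix :: "nat \<Rightarrow> (nat \<Rightarrow> nat \<Rightarrow> nat) \<Rightarrow> bool" where
  "coxeter_matrix n m \<longleftrightarrow>
     (\<forall>i<n. m i i = 1) \<and> (\<forall>i<n. \<forall>j<n. m i j = m j i) \<and>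
     (\<forall>i<n. \<forall>j<n. i \<noteq> j \<longrightarrow> m i j \<ge> 2)"

inductive cox_equiv :: "nat \<Rightarrow> (nat \<Rightarrow> nat \<Rightarrow> nat) \<Rightarrow> nat list \<Rightarrow> nat list \<Rightarrow> bool"
  for n m where
  refl: "cox_equiv n m u u"
| sym: "cox_equiv n m u v \<Longrightarrow> cox_equiv n m v u"
| trans: "cox_equiv n m u v \<Longrightarrow> cox_equiv n m v w \<Longrightarrow> cox_equiv n m u w"
| ctxt: "cox_equiv n m u v \<Longrightarrow> cox_equiv n m (a @ u @ b) (a @ v @ b)"
| square: "i < n \<Longrightarrow> cox_equiv n m [i, i] []"
| braid: "i < n \<Longrightarrow> j < n \<Longrightarrow> cox_equiv n m (alt_word i j (m i j)) (alt_word j i (m i j))"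

text \<open>(G, s_0..s_(n-1)) is a Coxeter system with Coxeter matrix m: G is a group
  generated by the s_i, and two words in the s_i are equal in G iff they are
  equivalent under the Coxeter relations (i.e. G has the Coxeter presentation;
  since all generators are involutions, the monoid presentation equals the group one).\<close>
definition coxeter_system :: "('a, 'c) monoid_scheme \<Rightarrow> nat \<Rightarrow> (nat \<Rightarrow> nat \<Rightarrow> nat) \<Rightarrow> (nat \<Rightarrow> 'a) \<Rightarrow> bool" where
  "coxeter_system G n m s \<longleftrightarrow>
     group G \<and> coxeter_matrix n m \<and> (\<forall>i<n. s i \<in> carrier G) \<and>
     carrier G = {word_eval G s w | w. set w \<subseteq> {..<n}} \<and>
     (\<forall>u v. set u \<subseteq> {..<n} \<longrightarrow> set v \<subseteq> {..<n} \<longrightarrow>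
        (word_eval G s u = word_eval G s v \<longleftrightarrow> cox_equiv n m u v))"

end

theory Submission
  imports Defs Complex_Main
begin

(* Proof idea (Humphreys' geometric representation argument).
   Let V be the real vector space with basis alpha_0, ..., alpha_(n-1) (realised as functions
   nat => real) and B the bilinear form B(alpha_i, alpha_j) = -cos(pi / m_ij).  The reflections
   sigma_i x = x - 2 B(alpha_i, x) alpha_i satisfy the Coxeter relations, so they define a
   representation R of G.  The key fact is the positivity theorem: if l(w s_i) > l(w) then
   R(w) alpha_i has nonnegative coordinates.  It is proved by induction on the length l,
   factoring w = x y with y in the dihedral subgroup W_ik generated by s_i, s_k, where the
   images R(y) alpha_i are computed explicitly (coefficients sin(q pi/m)/sin(pi/m)).
   If w s_i w^-1 = s_j then R(w) alpha_i = lambda alpha_j with lambda <> 0; for lambda > 0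
   we show phi w (v_i) = v_j by the same length induction, where the hypotheses (1), (2) on the
   v_i handle the dihedral factor; the case lambda < 0 reduces to s_j w and hypothesis (4).  Neither the finiteness of G nor hypothesis (3) (the case m_ij = 2 of
   hypothesis (2)) is needed. *)

lemma length_alt_word [simp]: "length (alt_word i j k) = k"
  by (induction k arbitrary: i j) auto

lemma alt_word_snoc: "alt_word i j (Suc p) = alt_word i j p @ [if even p then i else j]"
  by (induction p arbitrary: i j) auto

lemma set_alt_word: "set (alt_word i j p) \<subseteq> {i, j}"
  by (induction p arbitrary: i j) auto

lemma cox_equiv_parity: "cox_equiv n m u v \<Longrightarrow> even (length u) = even (length v)"
  by (induction rule: cox_equiv.induct) auto

text \<open>These are the coordinates of the roots of a dihedral group of order \<open>2M\<close>.\<close>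
definition dihedral_coeff :: "nat \<Rightarrow> nat \<Rightarrow> real" where
  "dihedral_coeff M q = sin (real q * pi / real M) / sin (pi / real M)"

lemma sin_pi_div_pos: "2 \<le> M \<Longrightarrow> 0 < sin (pi / real M)"
  by (rule sin_gt_zero) (auto simp: field_simps)

lemma dihedral_coeff_0 [simp]: "dihedral_coeff M 0 = 0"
  unfolding dihedral_coeff_def by simp

lemma dihedral_coeff_1: "2 \<le> M \<Longrightarrow> dihedral_coeff M 1 = 1"
  unfolding dihedral_coeff_def using sin_pi_div_pos[of M] by simp

lemma dihedral_coeff_M: "2 \<le> M \<Longrightarrow> dihedral_coeff M M = 0"
  unfolding dihedral_coeff_def by simp

lemma dihedral_coeff_M_minus_1: "2 \<le> M \<Longrightarrow> dihedral_coeff M (M - 1) = 1"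
proof -
  assume M: "2 \<le> M"
  have "real (M - 1) * pi / real M = pi - pi / real M"
    using M by (simp add: of_nat_diff field_simps)
  then show ?thesis
    unfolding dihedral_coeff_def using sin_pi_div_pos[OF M] by (simp add: sin_pi_minus)
qed

lemma dihedral_coeff_Suc_M: "2 \<le> M \<Longrightarrow> dihedral_coeff M (Suc M) = -1"
proof -
  assume M: "2 \<le> M"
  have "real (Suc M) * pi / real M = pi / real M + pi"
    using M by (simp add: field_simps)
  then show ?thesis
    unfolding dihedral_coeff_def using sin_pi_div_pos[OF M] by (simp add: sin_periodic_pi)
qed

lemma dihedral_coeff_nonneg: "2 \<le> M \<Longrightarrow> q \<le> M \<Longrightarrow> 0 \<le> dihedral_coeff M q"
  unfolding dihedral_coeff_def using sin_pi_div_pos[of M]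
  by (intro divide_nonneg_pos sin_ge_zero) (auto simp: field_simps)

lemma dihedral_coeff_pos: "2 \<le> M \<Longrightarrow> 0 < q \<Longrightarrow> q < M \<Longrightarrow> 0 < dihedral_coeff M q"
  unfolding dihedral_coeff_def using sin_pi_div_pos[of M]
  by (intro divide_pos_pos sin_gt_zero) (auto simp: field_simps)

lemma dihedral_coeff_rec:
  assumes M: "2 \<le> M"
  shows "dihedral_coeff M (Suc (Suc q)) =
           2 * cos (pi / real M) * dihedral_coeff M (Suc q) - dihedral_coeff M q"
proof -
  define t where "t = pi / real M"
  have a: "real (Suc (Suc q)) * pi / real M = real (Suc q) * t + t"
    and b: "real q * pi / real M = real (Suc q) * t - t"
    and c: "real (Suc q) * pi / real M = real (Suc q) * t"
    using M unfolding t_def by (simp_all add: field_simps)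
  have "sin (real (Suc (Suc q)) * pi / real M) =
          2 * cos t * sin (real (Suc q) * pi / real M) - sin (real q * pi / real M)"
    unfolding a b c by (simp add: sin_add sin_diff)
  then show ?thesis
    unfolding dihedral_coeff_def by (simp add: t_def diff_divide_distrib)
qed

text \<open>Since \<open>M \<ge> 2\<close>, the form \<open>B\<close> is positive definite on each dihedral plane.\<close>
lemma cos_pi_div_sq_less_1: "2 \<le> M \<Longrightarrow> cos (pi / real M) ^ 2 < 1"
  using sin_pi_div_pos[of M] by (simp add: cos_squared_eq)

section \<open>The geometric representation of a Coxeter matrix\<close>

text \<open>Vectors of \<open>V = \<real>^n\<close> are functions \<open>nat \<Rightarrow> real\<close>; coordinates \<open>\<ge> n\<close> are
  never touched by the reflections.\<close>
locale cox_mat =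
  fixes n :: nat and m :: "nat \<Rightarrow> nat \<Rightarrow> nat"
  assumes coxeter_matrix: "coxeter_matrix n m"
begin

lemma m_diag: "i < n \<Longrightarrow> m i i = 1"
  using coxeter_matrix unfolding coxeter_matrix_def by blast

lemma m_sym: "i < n \<Longrightarrow> j < n \<Longrightarrow> m i j = m j i"
  using coxeter_matrix unfolding coxeter_matrix_def by blast

lemma m_ge2: "i < n \<Longrightarrow> j < n \<Longrightarrow> i \<noteq> j \<Longrightarrow> 2 \<le> m i j"
  using coxeter_matrix unfolding coxeter_matrix_def by blast

definition root :: "nat \<Rightarrow> nat \<Rightarrow> real" where
  "root i = (\<lambda>t. if t = i then 1 else 0)"

definition gram :: "nat \<Rightarrow> nat \<Rightarrow> real" where
  "gram i j = - cos (pi / real (m i j))"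

definition bform :: "nat \<Rightarrow> (nat \<Rightarrow> real) \<Rightarrow> real" where
  "bform i x = (\<Sum>t<n. gram i t * x t)"

definition reflection :: "nat \<Rightarrow> (nat \<Rightarrow> real) \<Rightarrow> nat \<Rightarrow> real" where
  "reflection i x = (\<lambda>t. x t - 2 * bform i x * root i t)"

primrec word_rep :: "nat list \<Rightarrow> (nat \<Rightarrow> real) \<Rightarrow> nat \<Rightarrow> real" where
  "word_rep [] x = x"
| "word_rep (a # u) x = reflection a (word_rep u x)"

lemma bform_root: "t < n \<Longrightarrow> bform i (root t) = gram i t"
  unfolding bform_def root_def by (simp add: if_distrib cong: if_cong)

lemma bform_root_self: "i < n \<Longrightarrow> bform i (root i) = 1"
  using bform_root m_diag by (simp add: gram_def)

lemma bform_root_sym: "i < n \<Longrightarrow> j < n \<Longrightarrow> bform i (root j) = bform j (root i)"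
  using bform_root m_sym by (simp add: gram_def)

lemma bform_lin: "bform i (\<lambda>t. a * x t + b * y t) = a * bform i x + b * bform i y"
  unfolding bform_def by (simp add: algebra_simps sum.distrib sum_distrib_left)

lemma bform_diff: "bform i (\<lambda>t. x t - z t) = bform i x - bform i z"
  unfolding bform_def by (simp add: algebra_simps sum_subtractf)

lemma reflection_lin:
  "reflection i (\<lambda>t. a * x t + b * y t) = (\<lambda>t. a * reflection i x t + b * reflection i y t)"
  unfolding reflection_def bform_lin by (simp add: algebra_simps)

lemma reflection_root_self: "i < n \<Longrightarrow> reflection i (root i) = (\<lambda>t. - root i t)"
  unfolding reflection_def using bform_root_self by (simp add: fun_eq_iff)

lemma reflection_involutive: "i < n \<Longrightarrow> reflection i (reflection i x) = x"
proof -
  assume i: "i < n"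
  have "reflection i x = (\<lambda>t. 1 * x t + (- 2 * bform i x) * root i t)"
    unfolding reflection_def by (simp add: algebra_simps)
  then have "bform i (reflection i x) = 1 * bform i x + (- 2 * bform i x) * bform i (root i)"
    by (simp only: bform_lin)
  then have "bform i (reflection i x) = bform i x - 2 * bform i x"
    using bform_root_self[OF i] by simp
  then show ?thesis
    unfolding reflection_def[of i "reflection i x"] by (simp add: reflection_def algebra_simps)
qed

lemma word_rep_lin:
  "word_rep w (\<lambda>t. a * x t + b * y t) = (\<lambda>t. a * word_rep w x t + b * word_rep w y t)"
  by (induction w) (simp_all add: reflection_lin)

lemma word_rep_neg: "word_rep w (\<lambda>t. - x t) = (\<lambda>t. - word_rep w x t)"
  using word_rep_lin[of w "-1" x 0 x] by simp

lemma word_rep_append: "word_rep (u @ v) x = word_rep u (word_rep v x)"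
  by (induction u) auto

lemma word_rep_outside: "set u \<subseteq> {..<n} \<Longrightarrow> n \<le> t \<Longrightarrow> word_rep u x t = x t"
  by (induction u) (auto simp: reflection_def root_def)

lemma word_rep_fix: "\<forall>a\<in>set w. bform a y = 0 \<Longrightarrow> word_rep w y = y"
  by (induction w) (auto simp: reflection_def)

lemma reflection_plane:
  assumes "F < n" "H < n" "F \<noteq> H"
  shows "reflection F (\<lambda>t. a * root F t + b * root H t) =
           (\<lambda>t. (2 * cos (pi / real (m F H)) * b - a) * root F t + b * root H t)"
  unfolding reflection_def bform_lin using assms bform_root bform_root_self
  by (auto simp: gram_def algebra_simps root_def fun_eq_iff)

lemma word_rep_alt_pos:
  assumes "F < n" "H < n" "F \<noteq> H"
  shows "word_rep (alt_word F H p) (root (if even p then F else H)) =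
           (\<lambda>t. dihedral_coeff (m F H) (Suc p) * root F t + dihedral_coeff (m F H) p * root H t)"
  using assms
proof (induction p arbitrary: F H)
  case 0
  then show ?case using dihedral_coeff_1[OF m_ge2[OF 0]] by simp
next
  case (Suc p)
  let ?c = "dihedral_coeff (m F H)"
  have M: "2 \<le> m F H" using m_ge2 Suc.prems by blast
  have "word_rep (alt_word F H (Suc p)) (root (if even (Suc p) then F else H))
     = reflection F (word_rep (alt_word H F p) (root (if even p then H else F)))" by simp
  also have "\<dots> = reflection F (\<lambda>t. ?c p * root F t + ?c (Suc p) * root H t)"
    using Suc.IH[of H F] Suc.prems m_sym by (simp add: add.commute)
  also have "\<dots> = (\<lambda>t. ?c (Suc (Suc p)) * root F t + ?c (Suc p) * root H t)"
    using reflection_plane Suc.prems dihedral_coeff_rec[OF M, of p] by simp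
  finally show ?case .
qed

lemma word_rep_alt_neg:
  assumes FH: "F < n" "H < n" "F \<noteq> H" and p: "0 < p"
  shows "word_rep (alt_word F H p) (root (if odd p then F else H)) =
           (\<lambda>t. - (dihedral_coeff (m F H) p * root F t + dihedral_coeff (m F H) (p - 1) * root H t))"
proof -
  obtain q where q: "p = Suc q" using p by (cases p) auto
  let ?X = "if even q then F else H"
  have last: "(if odd p then F else H) = ?X" using q by simp
  have "word_rep (alt_word F H p) (root (if odd p then F else H))
      = word_rep (alt_word F H q) (reflection ?X (root ?X))"
    unfolding last by (simp only: q alt_word_snoc word_rep_append word_rep.simps)
  also have "\<dots> = (\<lambda>t. - word_rep (alt_word F H q) (root ?X) t)"
    using reflection_root_self FH word_rep_neg by simp
  finally show ?thesis using word_rep_alt_pos[OF FH, of q] q by simp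
qed

lemma braid_on_root:
  assumes ij: "i < n" "j < n" "i \<noteq> j"
  shows "word_rep (alt_word i j (m i j)) (root i) = word_rep (alt_word j i (m i j)) (root i)"
proof -
  let ?M = "m i j"
  let ?c = "dihedral_coeff ?M"
  have M: "2 \<le> ?M" using m_ge2 ij by blast
  have c: "?c ?M = 0" "?c (?M - 1) = 1" "?c (Suc ?M) = -1"
    using dihedral_coeff_M[OF M] dihedral_coeff_M_minus_1[OF M] dihedral_coeff_Suc_M[OF M] by auto
  have M0: "0 < ?M" using M by simp
  show ?thesis
  proof (cases "even ?M")
    case True
    then show ?thesis
      using word_rep_alt_pos[of i j ?M] word_rep_alt_neg[of j i ?M] ij M0 m_sym c by simp
  next
    case False
    then show ?thesis
      using word_rep_alt_neg[of i j ?M] word_rep_alt_pos[of j i ?M] ij M0 m_sym c by simp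
  qed
qed

text \<open>Every vector splits into a part in the plane of \<open>\<alpha>\<^sub>i, \<alpha>\<^sub>j\<close> and a part orthogonal to
  both; this uses that \<open>B\<close> is nondegenerate on the plane.\<close>
lemma plane_decomposition:
  assumes ij: "i < n" "j < n" "i \<noteq> j"
  shows "\<exists>p q y. x = (\<lambda>t. y t + (p * root i t + q * root j t)) \<and> bform i y = 0 \<and> bform j y = 0"
proof -
  define \<beta> where "\<beta> = bform i (root j)"
  have bji: "bform j (root i) = \<beta>" unfolding \<beta>_def using bform_root_sym ij by simp
  have D: "0 < 1 - \<beta>^2"
    using cos_pi_div_sq_less_1[OF m_ge2[OF ij]] bform_root[OF ij(2)] unfolding \<beta>_def gram_def
    by simp
  define a1 where "a1 = bform i x"
  define b1 where "b1 = bform j x"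
  define p where "p = (a1 - \<beta> * b1) / (1 - \<beta>^2)"
  define q where "q = (b1 - \<beta> * a1) / (1 - \<beta>^2)"
  define y where "y = (\<lambda>t. x t - (p * root i t + q * root j t))"
  have "p + q * \<beta> = ((a1 - \<beta> * b1) + (b1 - \<beta> * a1) * \<beta>) / (1 - \<beta>^2)"
    unfolding p_def q_def by (simp add: add_divide_distrib)
  also have "\<dots> = a1 * (1 - \<beta>^2) / (1 - \<beta>^2)" by (simp add: algebra_simps power2_eq_square)
  finally have pq1: "p + q * \<beta> = a1" using D by simp
  have "p * \<beta> + q = ((a1 - \<beta> * b1) * \<beta> + (b1 - \<beta> * a1)) / (1 - \<beta>^2)"
    unfolding p_def q_def by (simp add: add_divide_distrib)
  also have "\<dots> = b1 * (1 - \<beta>^2) / (1 - \<beta>^2)" by (simp add: algebra_simps power2_eq_square)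
  finally have pq2: "p * \<beta> + q = b1" using D by simp
  have "bform i y = 0" "bform j y = 0"
    using pq1 pq2 unfolding y_def bform_diff bform_lin a1_def b1_def \<beta>_def
    using bform_root_self ij bji[unfolded \<beta>_def] by (simp_all add: algebra_simps)
  then show ?thesis by (intro exI[of _ p] exI[of _ q] exI[of _ y]) (auto simp: y_def)
qed

lemma word_rep_braid:
  assumes ij: "i < n" "j < n"
  shows "word_rep (alt_word i j (m i j)) = word_rep (alt_word j i (m i j))"
proof (cases "i = j")
  case False
  let ?u = "alt_word i j (m i j)" and ?v = "alt_word j i (m i j)"
  have on_i: "word_rep ?u (root i) = word_rep ?v (root i)"
    using braid_on_root[OF ij False] .
  have on_j: "word_rep ?u (root j) = word_rep ?v (root j)"
    using braid_on_root[of j i] ij False m_sym by simp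
  show ?thesis
  proof
    fix x
    obtain p q y where x: "x = (\<lambda>t. y t + (p * root i t + q * root j t))"
      and y: "bform i y = 0" "bform j y = 0"
      using plane_decomposition[OF ij False] by blast
    have split: "word_rep w x = (\<lambda>t. y t + (p * word_rep w (root i) t + q * word_rep w (root j) t))"
      if "set w \<subseteq> {i, j}" for w
    proof -
      have "word_rep w y = y" using that y by (intro word_rep_fix) auto
      then show ?thesis
        using x word_rep_lin[of w 1 y 1 "\<lambda>t. p * root i t + q * root j t"]
          word_rep_lin[of w p "root i" q "root j"] by simp
    qed
    show "word_rep ?u x = word_rep ?v x"
      using split[of ?u] split[of ?v] set_alt_word[of i j] set_alt_word[of j i] on_i on_j
      by (simp add: insert_commute)
  qed
qed simp

lemma word_rep_cox_equiv: "cox_equiv n m u v \<Longrightarrow> word_rep u = word_rep v"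
proof (induction rule: cox_equiv.induct)
  case (ctxt u v a b)
  then show ?case by (intro ext) (simp add: word_rep_append)
next
  case (square i)
  then show ?case by (auto simp: fun_eq_iff reflection_involutive)
next
  case (braid i j)
  then show ?case by (rule word_rep_braid)
qed auto

end

locale coxeter_sys =
  fixes G :: "('a, 'c) monoid_scheme" (structure) and n :: nat and m :: "nat \<Rightarrow> nat \<Rightarrow> nat"
    and s :: "nat \<Rightarrow> 'a"
  assumes coxeter_system: "coxeter_system G n m s"
begin

sublocale group G
  using coxeter_system unfolding coxeter_system_def by blast

sublocale cox_mat n m
  using coxeter_system unfolding coxeter_system_def cox_mat_def by blast

lemma gen_closed [simp]: "i < n \<Longrightarrow> s i \<in> carrier G"
  using coxeter_system unfolding coxeter_system_def by blast

lemma word_eval_eq_iff: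
  "set u \<subseteq> {..<n} \<Longrightarrow> set v \<subseteq> {..<n} \<Longrightarrow>
     word_eval G s u = word_eval G s v \<longleftrightarrow> cox_equiv n m u v"
  using coxeter_system unfolding coxeter_system_def by blast

lemma word_eval_closed [simp]: "set u \<subseteq> {..<n} \<Longrightarrow> word_eval G s u \<in> carrier G"
  by (induction u) auto

lemma word_eval_append:
  "set u \<subseteq> {..<n} \<Longrightarrow> set v \<subseteq> {..<n} \<Longrightarrow>
     word_eval G s (u @ v) = word_eval G s u \<otimes> word_eval G s v"
  by (induction u) (auto simp: m_assoc)

lemma word_eval_snoc: "set u \<subseteq> {..<n} \<Longrightarrow> a < n \<Longrightarrow> word_eval G s (u @ [a]) = word_eval G s u \<otimes> s a"
  using word_eval_append[of u "[a]"] by simp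

lemma carrier_words: "carrier G = {word_eval G s w | w. set w \<subseteq> {..<n}}"
  using coxeter_system unfolding coxeter_system_def by blast

lemma carrier_word: "g \<in> carrier G \<Longrightarrow> \<exists>u. set u \<subseteq> {..<n} \<and> word_eval G s u = g"
  by (subst (asm) carrier_words) blast

lemma gen_square [simp]: "i < n \<Longrightarrow> s i \<otimes> s i = \<one>"
proof -
  assume i: "i < n"
  have "cox_equiv n m [i, i] []" using i by (rule cox_equiv.square)
  then show ?thesis using word_eval_eq_iff[of "[i, i]" "[]"] i by simp
qed

lemma gen_cancel_right [simp]: "i < n \<Longrightarrow> g \<in> carrier G \<Longrightarrow> g \<otimes> s i \<otimes> s i = g"
  by (simp add: m_assoc)

lemma gen_cancel_left [simp]: "i < n \<Longrightarrow> g \<in> carrier G \<Longrightarrow> s i \<otimes> (s i \<otimes> g) = g"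
  by (simp add: m_assoc[symmetric])

definition cox_length :: "'a \<Rightarrow> nat" where
  "cox_length g = (LEAST p. \<exists>u. set u \<subseteq> {..<n} \<and> length u = p \<and> word_eval G s u = g)"

lemma reduced_word_exists:
  "g \<in> carrier G \<Longrightarrow> \<exists>u. set u \<subseteq> {..<n} \<and> length u = cox_length g \<and> word_eval G s u = g"
  unfolding cox_length_def by (rule LeastI_ex) (use carrier_word in blast)

lemma cox_length_le: "set u \<subseteq> {..<n} \<Longrightarrow> cox_length (word_eval G s u) \<le> length u"
  unfolding cox_length_def by (rule Least_le) blast

text \<open>All words for \<open>g\<close> have the parity of \<open>cox_length g\<close>, since the relations preserve parity.\<close>
lemma cox_length_parity:
  assumes u: "set u \<subseteq> {..<n}"
  shows "even (cox_length (word_eval G s u)) = even (length u)"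
proof -
  obtain v where v: "set v \<subseteq> {..<n}" "length v = cox_length (word_eval G s u)"
    "word_eval G s v = word_eval G s u"
    using reduced_word_exists[of "word_eval G s u"] u by auto
  have "cox_equiv n m v u" using word_eval_eq_iff[OF v(1) u] v(3) by simp
  then show ?thesis using cox_equiv_parity v(2) by metis
qed

lemma cox_length_mult:
  assumes g: "g \<in> carrier G" and h: "h \<in> carrier G"
  shows "cox_length (g \<otimes> h) \<le> cox_length g + cox_length h"
proof -
  obtain u where u: "set u \<subseteq> {..<n}" "length u = cox_length g" "word_eval G s u = g"
    using reduced_word_exists[OF g] by blast
  obtain v where v: "set v \<subseteq> {..<n}" "length v = cox_length h" "word_eval G s v = h"
    using reduced_word_exists[OF h] by blast
  have "g \<otimes> h = word_eval G s (u @ v)" using word_eval_append u v by simp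
  then show ?thesis using cox_length_le[of "u @ v"] u v by simp
qed

lemma cox_length_one [simp]: "cox_length \<one> = 0"
  using cox_length_le[of "[]"] by simp

lemma cox_length_zero: "g \<in> carrier G \<Longrightarrow> cox_length g = 0 \<Longrightarrow> g = \<one>"
  using reduced_word_exists by fastforce

lemma cox_length_mult_gen:
  assumes g: "g \<in> carrier G" and a: "a < n"
  shows "cox_length (g \<otimes> s a) = Suc (cox_length g) \<or> cox_length g = Suc (cox_length (g \<otimes> s a))"
proof -
  obtain u where u: "set u \<subseteq> {..<n}" "length u = cox_length g" "word_eval G s u = g"
    using reduced_word_exists[OF g] by blast
  have "even (cox_length (g \<otimes> s a)) = odd (cox_length g)"
    using cox_length_parity[of "u @ [a]"] cox_length_parity[of u] u a word_eval_snoc by simp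
  moreover have "cox_length (g \<otimes> s a) \<le> cox_length g + 1"
    using cox_length_mult[of g "s a"] g a cox_length_le[of "[a]"] by simp
  moreover have "cox_length g \<le> cox_length (g \<otimes> s a) + 1"
    using cox_length_mult[of "g \<otimes> s a" "s a"] g a cox_length_le[of "[a]"] by simp
  moreover have "\<And>x y::nat. even x = odd y \<Longrightarrow> x \<le> y + 1 \<Longrightarrow> y \<le> x + 1 \<Longrightarrow>
      x = Suc y \<or> y = Suc x"
    by presburger
  ultimately show ?thesis by blast
qed

lemma cox_length_gen: "a < n \<Longrightarrow> cox_length (s a) = 1"
  using cox_length_mult_gen[of \<one> a] by simp

lemma cox_length_parity_gen:
  "g \<in> carrier G \<Longrightarrow> a < n \<Longrightarrow> even (cox_length (g \<otimes> s a)) = odd (cox_length g)"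
  using cox_length_mult_gen by fastforce

lemma right_descent_exists:
  assumes g: "g \<in> carrier G" and pos: "0 < cox_length g"
  shows "\<exists>k<n. cox_length (g \<otimes> s k) < cox_length g"
proof -
  obtain u where u: "set u \<subseteq> {..<n}" "length u = cox_length g" "word_eval G s u = g"
    using reduced_word_exists[OF g] by blast
  then obtain u' k where uk: "u = u' @ [k]" using pos by (metis length_greater_0_conv rev_exhaust)
  have k: "k < n" and u': "set u' \<subseteq> {..<n}" using u uk by auto
  have "g = word_eval G s u' \<otimes> s k"
    using word_eval_snoc[OF u' k] uk u by simp
  then have "g \<otimes> s k = word_eval G s u'" using k u' by simp
  then have "cox_length (g \<otimes> s k) \<le> length u'" using cox_length_le[OF u'] by simp
  then show ?thesis using k u uk by auto
qed

text \<open>By \<open>word_rep_cox_equiv\<close> the action of a word depends only on the group element.\<close>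
definition geom_rep :: "'a \<Rightarrow> (nat \<Rightarrow> real) \<Rightarrow> nat \<Rightarrow> real" where
  "geom_rep g = word_rep (SOME u. set u \<subseteq> {..<n} \<and> word_eval G s u = g)"

lemma geom_rep_word_eval: "set u \<subseteq> {..<n} \<Longrightarrow> geom_rep (word_eval G s u) = word_rep u"
proof -
  assume u: "set u \<subseteq> {..<n}"
  let ?v = "SOME v. set v \<subseteq> {..<n} \<and> word_eval G s v = word_eval G s u"
  have "set ?v \<subseteq> {..<n} \<and> word_eval G s ?v = word_eval G s u" by (rule someI) (use u in blast)
  then have "cox_equiv n m ?v u" using word_eval_eq_iff[of ?v u] u by simp
  then show ?thesis unfolding geom_rep_def by (rule word_rep_cox_equiv)
qed

lemma geom_rep_word: "g \<in> carrier G \<Longrightarrow> \<exists>u. set u \<subseteq> {..<n} \<and> geom_rep g = word_rep u"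
  using carrier_word geom_rep_word_eval by blast

lemma geom_rep_mult:
  assumes g: "g \<in> carrier G" and h: "h \<in> carrier G"
  shows "geom_rep (g \<otimes> h) x = geom_rep g (geom_rep h x)"
proof -
  obtain u where u: "set u \<subseteq> {..<n}" "word_eval G s u = g" using carrier_word[OF g] by blast
  obtain v where v: "set v \<subseteq> {..<n}" "word_eval G s v = h" using carrier_word[OF h] by blast
  have "g \<otimes> h = word_eval G s (u @ v)" using word_eval_append u v by simp
  then have "geom_rep (g \<otimes> h) = word_rep (u @ v)" using geom_rep_word_eval u v by simp
  moreover have "geom_rep g = word_rep u" "geom_rep h = word_rep v" using geom_rep_word_eval u v by auto
  ultimately show ?thesis by (simp add: word_rep_append)
qed

lemma geom_rep_one: "geom_rep \<one> x = x"
  using geom_rep_word_eval[of "[]"] by simp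

lemma geom_rep_gen: "a < n \<Longrightarrow> geom_rep (s a) x = reflection a x"
  using geom_rep_word_eval[of "[a]"] by simp

lemma geom_rep_lin:
  "g \<in> carrier G \<Longrightarrow> geom_rep g (\<lambda>t. a * x t + b * y t) = (\<lambda>t. a * geom_rep g x t + b * geom_rep g y t)"
  using geom_rep_word[of g] word_rep_lin by auto

lemma geom_rep_neg: "g \<in> carrier G \<Longrightarrow> geom_rep g (\<lambda>t. - x t) = (\<lambda>t. - geom_rep g x t)"
  using geom_rep_word[of g] word_rep_neg by auto

lemma geom_rep_zero: "g \<in> carrier G \<Longrightarrow> geom_rep g (\<lambda>t. 0) = (\<lambda>t. 0)"
  using geom_rep_lin[of g 0 "\<lambda>t. 0" 0 "\<lambda>t. 0"] by simp

lemma geom_rep_outside: "g \<in> carrier G \<Longrightarrow> n \<le> t \<Longrightarrow> geom_rep g x t = x t"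
  using geom_rep_word[of g] word_rep_outside by auto

lemma geom_rep_inj:
  assumes g: "g \<in> carrier G" and eq: "geom_rep g x = geom_rep g y"
  shows "x = y"
proof -
  have "geom_rep (inv g \<otimes> g) x = geom_rep (inv g \<otimes> g) y"
    using geom_rep_mult[of "inv g" g] g eq by simp
  then show ?thesis using g geom_rep_one by simp
qed

lemma geom_rep_root_nonzero:
  assumes g: "g \<in> carrier G"
  shows "geom_rep g (root i) \<noteq> (\<lambda>t. 0)"
proof
  assume "geom_rep g (root i) = (\<lambda>t. 0)"
  then have "root i = (\<lambda>t. 0)" using geom_rep_inj[OF g] geom_rep_zero[OF g] by metis
  then have "root i i = 0" by metis
  then show False by (simp add: root_def)
qed

end

section \<open>Dihedral parabolic subgroups\<close>

context coxeter_sys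
begin

lemma alt_word_closed: "F < n \<Longrightarrow> H < n \<Longrightarrow> set (alt_word F H p) \<subseteq> {..<n}"
  using set_alt_word[of F H p] by auto

lemma alt_word_cancel_last:
  assumes FH: "F < n" "H < n" and p: "0 < p"
  shows "word_eval G s (alt_word F H p) \<otimes> s (if odd p then F else H) =
           word_eval G s (alt_word F H (p - 1))"
proof -
  obtain q where q: "p = Suc q" using p by (cases p) auto
  let ?X = "if even q then F else H"
  have X: "?X < n" using FH by auto
  have "word_eval G s (alt_word F H p) = word_eval G s (alt_word F H q) \<otimes> s ?X"
    unfolding q alt_word_snoc using word_eval_snoc[OF alt_word_closed[OF FH] X] .
  moreover have "(if odd p then F else H) = ?X" using q by simp
  ultimately show ?thesis using X alt_word_closed[OF FH] q by simp
qed

context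
  fixes i k assumes ik: "i < n" "k < n" "i \<noteq> k"
begin

definition dihedral_sub :: "'a set" where
  "dihedral_sub = {word_eval G s u | u. set u \<subseteq> {i, k}}"

definition other :: "nat \<Rightarrow> nat" where
  "other F = (if F = i then k else i)"

definition dihedral_nf :: "'a \<Rightarrow> nat \<Rightarrow> nat \<Rightarrow> bool" where
  "dihedral_nf y F p \<longleftrightarrow> F \<in> {i, k} \<and> p \<le> m i k \<and> y = word_eval G s (alt_word F (other F) p)"

definition dihedral_length :: "'a \<Rightarrow> nat" where
  "dihedral_length y = (LEAST p. \<exists>F. dihedral_nf y F p)"

definition last_letter :: "nat \<Rightarrow> nat \<Rightarrow> nat" where
  "last_letter F p = (if odd p then F else other F)"

lemma m_ik_ge2: "2 \<le> m i k"
  using m_ge2 ik by blast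

lemma other_simps:
  "F \<in> {i, k} \<Longrightarrow> other F \<in> {i, k}" "F \<in> {i, k} \<Longrightarrow> other (other F) = F"
  "F \<in> {i, k} \<Longrightarrow> other F \<noteq> F" "F \<in> {i, k} \<Longrightarrow> m F (other F) = m i k"
  unfolding other_def using ik m_sym by auto

lemma pair_less_n: "F \<in> {i, k} \<Longrightarrow> F < n"
  using ik by auto

lemma pair_words: "set u \<subseteq> {i, k} \<Longrightarrow> set u \<subseteq> {..<n}"
  using ik by auto

lemma dihedral_sub_closed: "y \<in> dihedral_sub \<Longrightarrow> y \<in> carrier G"
  unfolding dihedral_sub_def using pair_words by auto

lemma gen_dihedral_sub: "a \<in> {i, k} \<Longrightarrow> s a \<in> dihedral_sub"
  unfolding dihedral_sub_def using pair_less_n by (intro CollectI exI[where x="[a]"]) auto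

lemma dihedral_sub_mult_left: "y \<in> dihedral_sub \<Longrightarrow> a \<in> {i, k} \<Longrightarrow> s a \<otimes> y \<in> dihedral_sub"
proof -
  assume "y \<in> dihedral_sub" "a \<in> {i, k}"
  then obtain u where u: "set (a # u) \<subseteq> {i, k}" "y = word_eval G s u"
    unfolding dihedral_sub_def by auto
  then have "s a \<otimes> y = word_eval G s (a # u)" by simp
  then show ?thesis unfolding dihedral_sub_def using u(1) by blast
qed

lemma dihedral_sub_mult_right: "y \<in> dihedral_sub \<Longrightarrow> a \<in> {i, k} \<Longrightarrow> y \<otimes> s a \<in> dihedral_sub"
proof -
  assume "y \<in> dihedral_sub" and a: "a \<in> {i, k}"
  then obtain u where u: "set (u @ [a]) \<subseteq> {i, k}" "y = word_eval G s u"
    unfolding dihedral_sub_def by auto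
  then have "y \<otimes> s a = word_eval G s (u @ [a])"
    using word_eval_snoc pair_words pair_less_n[OF a] by simp
  then show ?thesis unfolding dihedral_sub_def using u(1) by blast
qed

lemma braid_relation:
  assumes F: "F \<in> {i, k}"
  shows "word_eval G s (alt_word F (other F) (m i k)) = word_eval G s (alt_word (other F) F (m i k))"
proof -
  have "cox_equiv n m (alt_word F (other F) (m F (other F))) (alt_word (other F) F (m F (other F)))"
    using F other_simps pair_less_n by (intro cox_equiv.braid) auto
  then show ?thesis
    using word_eval_eq_iff alt_word_closed F other_simps pair_less_n by auto
qed

text \<open>Normal forms are stable under left multiplication by \<open>s\<^sub>i, s\<^sub>k\<close>, at the cost of at most
  one letter; at length \<open>m\<^sub>i\<^sub>k\<close> the braid relation is used.\<close>
lemma dihedral_nf_mult_left: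
  assumes N: "dihedral_nf y F p" and a: "a \<in> {i, k}"
  shows "\<exists>F' p'. dihedral_nf (s a \<otimes> y) F' p' \<and> p' \<le> p + 1"
proof -
  have F: "F \<in> {i, k}" and p: "p \<le> m i k" and y: "y = word_eval G s (alt_word F (other F) p)"
    using N unfolding dihedral_nf_def by auto
  have words: "set (alt_word F' H q) \<subseteq> {..<n}" if "F' \<in> {i, k}" "H \<in> {i, k}" for F' H q
    using alt_word_closed pair_less_n that by blast
  consider "a = F" "p = 0" | q where "a = F" "p = Suc q" | "a \<noteq> F" "p < m i k" | "a \<noteq> F" "p = m i k"
    using p by (cases p) force+
  then show ?thesis
  proof cases
    case 1
    then have "dihedral_nf (s a \<otimes> y) a 1"
      unfolding dihedral_nf_def using y a m_ik_ge2 pair_less_n by auto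
    then show ?thesis using 1 by auto
  next
    case (2 q)
    then have "s a \<otimes> y = word_eval G s (alt_word (other F) F q)"
      using y pair_less_n[OF a] words F other_simps by simp
    then have "dihedral_nf (s a \<otimes> y) (other F) q"
      unfolding dihedral_nf_def using other_simps F p 2 by auto
    then show ?thesis using 2 by (intro exI[of _ "other F"] exI[of _ q]) auto
  next
    case 3
    then have "a = other F" "other a = F" using a F unfolding other_def by auto
    then have "dihedral_nf (s a \<otimes> y) a (Suc p)" unfolding dihedral_nf_def using y a 3 by auto
    then show ?thesis by auto
  next
    case 4
    then have aF: "a = other F" "other a = F" using a F unfolding other_def by auto
    obtain q where q: "m i k = Suc q" using m_ik_ge2 by (cases "m i k") auto
    have "y = s a \<otimes> word_eval G s (alt_word F a q)"
      using y braid_relation[OF F] 4 aF q by simp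
    then have "s a \<otimes> y = word_eval G s (alt_word F (other F) q)"
      using aF pair_less_n[OF a] words F a by simp
    then have "dihedral_nf (s a \<otimes> y) F q" unfolding dihedral_nf_def using F q by auto
    then show ?thesis using 4 q by (intro exI[of _ F] exI[of _ q]) auto
  qed
qed

lemma dihedral_nf_exists: "y \<in> dihedral_sub \<Longrightarrow> \<exists>F p. dihedral_nf y F p"
proof -
  assume "y \<in> dihedral_sub"
  then obtain u where u: "set u \<subseteq> {i, k}" "y = word_eval G s u" unfolding dihedral_sub_def by blast
  have "\<exists>F p. dihedral_nf (word_eval G s u) F p" using u(1)
  proof (induction u)
    case Nil
    have "dihedral_nf \<one> i 0" unfolding dihedral_nf_def by simp
    then show ?case by auto
  next
    case (Cons a u)
    then show ?case using dihedral_nf_mult_left[of "word_eval G s u" _ _ a] by fastforce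
  qed
  then show ?thesis using u by simp
qed

lemma dihedral_length_nf: "y \<in> dihedral_sub \<Longrightarrow> \<exists>F. dihedral_nf y F (dihedral_length y)"
  unfolding dihedral_length_def by (rule LeastI_ex) (use dihedral_nf_exists in blast)

lemma dihedral_length_le: "dihedral_nf y F p \<Longrightarrow> dihedral_length y \<le> p"
  unfolding dihedral_length_def by (rule Least_le) blast

lemma dihedral_nf_words: "dihedral_nf y F p \<Longrightarrow> set (alt_word F (other F) p) \<subseteq> {..<n}"
  unfolding dihedral_nf_def using alt_word_closed pair_less_n other_simps by blast

lemma cox_length_le_dihedral_length: "y \<in> dihedral_sub \<Longrightarrow> cox_length y \<le> dihedral_length y"
  using dihedral_length_nf cox_length_le[OF dihedral_nf_words] unfolding dihedral_nf_def
  by fastforce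

lemma dihedral_length_parity:
  "y \<in> dihedral_sub \<Longrightarrow> even (dihedral_length y) = even (cox_length y)"
  using dihedral_length_nf cox_length_parity[OF dihedral_nf_words] unfolding dihedral_nf_def
  by fastforce

lemma dihedral_length_mult_left:
  "y \<in> dihedral_sub \<Longrightarrow> a \<in> {i, k} \<Longrightarrow> dihedral_length (s a \<otimes> y) \<le> dihedral_length y + 1"
  using dihedral_length_nf dihedral_nf_mult_left dihedral_length_le by (meson le_trans)

lemma dihedral_length_gen: "a \<in> {i, k} \<Longrightarrow> dihedral_length (s a) = 1"
proof -
  assume a: "a \<in> {i, k}"
  have "dihedral_nf (s a) a 1" unfolding dihedral_nf_def using a m_ik_ge2 pair_less_n by auto
  then have "dihedral_length (s a) \<le> 1" by (rule dihedral_length_le)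
  moreover have "odd (dihedral_length (s a))"
    using dihedral_length_parity[OF gen_dihedral_sub[OF a]] cox_length_gen pair_less_n[OF a] by simp
  ultimately show ?thesis by (cases "dihedral_length (s a)") auto
qed

lemma geom_rep_nf: "dihedral_nf y F p \<Longrightarrow> geom_rep y = word_rep (alt_word F (other F) p)"
  using geom_rep_word_eval dihedral_nf_words unfolding dihedral_nf_def by blast

lemma geom_rep_nf_last:
  assumes N: "dihedral_nf y F p" and p: "0 < p" and i: "i = last_letter F p"
  shows "geom_rep y (root i) =
           (\<lambda>t. - (dihedral_coeff (m i k) p * root F t + dihedral_coeff (m i k) (p - 1) * root (other F) t))"
proof -
  have F: "F \<in> {i, k}" using N unfolding dihedral_nf_def by auto
  have "geom_rep y (root i) = word_rep (alt_word F (other F) p) (root (if odd p then F else other F))"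
    using geom_rep_nf[OF N] i unfolding last_letter_def by simp
  also have "\<dots> = (\<lambda>t. - (dihedral_coeff (m F (other F)) p * root F t +
                          dihedral_coeff (m F (other F)) (p - 1) * root (other F) t))"
    using word_rep_alt_neg[of F "other F" p] pair_less_n[OF F] pair_less_n[OF other_simps(1)[OF F]]
      other_simps(3)[OF F] p by simp
  finally show ?thesis using other_simps(4)[OF F] by simp
qed

lemma geom_rep_nf_not_last:
  assumes N: "dihedral_nf y F p" and i: "i \<noteq> last_letter F p"
  shows "geom_rep y (root i) =
           (\<lambda>t. dihedral_coeff (m i k) (Suc p) * root F t + dihedral_coeff (m i k) p * root (other F) t)"
proof -
  have F: "F \<in> {i, k}" using N unfolding dihedral_nf_def by auto
  then have "i = (if even p then F else other F)"
    using i unfolding last_letter_def other_def by auto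
  then have "geom_rep y (root i) = word_rep (alt_word F (other F) p) (root (if even p then F else other F))"
    using geom_rep_nf[OF N] by simp
  also have "\<dots> = (\<lambda>t. dihedral_coeff (m F (other F)) (Suc p) * root F t +
                       dihedral_coeff (m F (other F)) p * root (other F) t)"
    using word_rep_alt_pos[of F "other F" p] pair_less_n[OF F] pair_less_n[OF other_simps(1)[OF F]]
      other_simps(3)[OF F] by simp
  finally show ?thesis using other_simps(4)[OF F] by simp
qed

lemma plane_basis_change:
  "F \<in> {i, k} \<Longrightarrow> (\<lambda>t. a * root F t + b * root (other F) t) =
     (\<lambda>t. (if F = i then a else b) * root i t + (if F = i then b else a) * root k t)"
  unfolding other_def by (auto simp: fun_eq_iff)


lemma dihedral_root_nonneg:
  assumes y: "y \<in> dihedral_sub" and lt: "dihedral_length y < dihedral_length (y \<otimes> s i)"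
  shows "\<exists>c d. 0 \<le> c \<and> 0 \<le> d \<and> geom_rep y (root i) = (\<lambda>t. c * root i t + d * root k t)"
proof (cases "dihedral_length y = 0")
  case True
  then obtain F where "dihedral_nf y F 0" using dihedral_length_nf[OF y] by auto
  then have "geom_rep y (root i) = (\<lambda>t. 1 * root i t + 0 * root k t)"
    unfolding dihedral_nf_def using geom_rep_one by simp
  then show ?thesis by (intro exI[of _ "1::real"] exI[of _ "0::real"]) auto
next
  case False
  define p where "p = dihedral_length y"
  obtain F where N: "dihedral_nf y F p" using dihedral_length_nf[OF y] p_def by blast
  have F: "F \<in> {i, k}" and pM: "p \<le> m i k" and ye: "y = word_eval G s (alt_word F (other F) p)"
    using N unfolding dihedral_nf_def by auto
  have Fn: "F < n" "other F < n" using pair_less_n F other_simps by auto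
  have p0: "0 < p" using False p_def by simp
  have not_last: "i \<noteq> last_letter F p"
  proof
    assume "i = last_letter F p"
    then have "y \<otimes> s i = word_eval G s (alt_word F (other F) (p - 1))"
      using alt_word_cancel_last[OF Fn p0] ye unfolding last_letter_def by simp
    then have "dihedral_nf (y \<otimes> s i) F (p - 1)" unfolding dihedral_nf_def using F pM by auto
    then show False using dihedral_length_le lt p_def p0 by fastforce
  qed
  have "p \<noteq> m i k"
  proof
    assume pm: "p = m i k"
    have "y = word_eval G s (alt_word (other F) F (m i k))" using ye pm braid_relation[OF F] by simp
    moreover have "i = (if odd (m i k) then other F else F)"
      using not_last pm F unfolding last_letter_def other_def by auto
    ultimately have "y \<otimes> s i = word_eval G s (alt_word (other F) F (m i k - 1))"
      using alt_word_cancel_last[of "other F" F "m i k"] Fn m_ik_ge2 by simp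
    then have "dihedral_nf (y \<otimes> s i) (other F) (m i k - 1)"
      unfolding dihedral_nf_def using F other_simps by auto
    then show False using dihedral_length_le lt p_def pm m_ik_ge2 by fastforce
  qed
  then have "0 \<le> dihedral_coeff (m i k) (Suc p)" "0 \<le> dihedral_coeff (m i k) p"
    using dihedral_coeff_nonneg[OF m_ik_ge2] pM by auto
  then show ?thesis
    using geom_rep_nf_not_last[OF N not_last] plane_basis_change[OF F] by fastforce
qed

definition root_image_case :: "'a \<Rightarrow> real \<Rightarrow> real \<Rightarrow> bool" where
  "root_image_case y c d \<longleftrightarrow>
     (c \<le> 0 \<and> d \<le> 0) \<or> (0 < c \<and> 0 < d) \<or>
     (c = 1 \<and> d = 0 \<and> (y = \<one> \<or> (even (m i k) \<and> y = word_eval G s (alt_word k i (m i k - 1))))) \<or>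
     (c = 0 \<and> d = 1 \<and> odd (m i k) \<and> y = word_eval G s (alt_word i k (m i k - 1)))"

lemma root_image_case_nonpos: "c \<le> 0 \<Longrightarrow> d \<le> 0 \<Longrightarrow> root_image_case y c d"
  and root_image_case_pos: "0 < c \<Longrightarrow> 0 < d \<Longrightarrow> root_image_case y c d"
  unfolding root_image_case_def by auto

lemma root_image_case_penultimate:
  assumes N: "dihedral_nf y F p" and p: "p = m i k - 1" and i: "i \<noteq> last_letter F p"
  shows "root_image_case y (if F = i then 0 else 1) (if F = i then 1 else 0)"
proof -
  have F: "F \<in> {i, k}" and ye: "y = word_eval G s (alt_word F (other F) p)"
    using N unfolding dihedral_nf_def by auto
  have pF: "even p \<longleftrightarrow> F = i"
    using i F ik unfolding last_letter_def other_def by (auto split: if_splits)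
  have "odd (m i k) \<longleftrightarrow> even p" using p m_ik_ge2 by (cases "m i k") auto
  then show ?thesis
    unfolding root_image_case_def using F pF ye p ik unfolding other_def by auto
qed

lemma dihedral_root_image:
  assumes y: "y \<in> dihedral_sub"
  shows "\<exists>c d. geom_rep y (root i) = (\<lambda>t. c * root i t + d * root k t) \<and> root_image_case y c d"
proof -
  obtain F p where N: "dihedral_nf y F p" using dihedral_nf_exists[OF y] by blast
  have F: "F \<in> {i, k}" and pM: "p \<le> m i k" and ye: "y = word_eval G s (alt_word F (other F) p)"
    using N unfolding dihedral_nf_def by auto
  let ?c = "dihedral_coeff (m i k)"
  have M: "2 \<le> m i k" by (rule m_ik_ge2)
  have in_plane: "\<exists>c d. geom_rep y (root i) = (\<lambda>t. c * root i t + d * root k t) \<and> root_image_case y c d"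
    if "geom_rep y (root i) = (\<lambda>t. a * root F t + b * root (other F) t)"
      and "root_image_case y (if F = i then a else b) (if F = i then b else a)" for a b
    using that plane_basis_change[OF F]
    by (intro exI[of _ "if F = i then a else b"] exI[of _ "if F = i then b else a"]) simp
  consider "p = 0" | "0 < p" "i = last_letter F p" | "i \<noteq> last_letter F p" "p = m i k"
    | "i \<noteq> last_letter F p" "p = m i k - 1" | "i \<noteq> last_letter F p" "0 < p" "p < m i k - 1"
    using pM by linarith
  then show ?thesis
  proof cases
    case 1
    then have "geom_rep y (root i) = (\<lambda>t. 1 * root i t + 0 * root k t)" "y = \<one>"
      using ye geom_rep_one by simp_all
    then show ?thesis unfolding root_image_case_def by blast
  next
    case 2
    have eq: "geom_rep y (root i) = (\<lambda>t. (- ?c p) * root F t + (- ?c (p - 1)) * root (other F) t)"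
      using geom_rep_nf_last[OF N 2] by simp
    have "?c p \<ge> 0" "?c (p - 1) \<ge> 0" using dihedral_coeff_nonneg[OF M] pM by auto
    then show ?thesis by (intro in_plane[OF eq]) (auto intro!: root_image_case_nonpos)
  next
    case 3
    then show ?thesis
      using dihedral_coeff_M[OF M] dihedral_coeff_Suc_M[OF M]
      by (intro in_plane[OF geom_rep_nf_not_last[OF N 3(1)]]) (auto intro!: root_image_case_nonpos)
  next
    case 4
    then show ?thesis
      using root_image_case_penultimate[OF N 4(2,1)]
        dihedral_coeff_M[OF M] dihedral_coeff_M_minus_1[OF M] M
      by (intro in_plane[OF geom_rep_nf_not_last[OF N 4(1)]]) (auto simp: Suc_diff_1)
  next
    case 5
    have "?c (Suc p) > 0" "?c p > 0" using dihedral_coeff_pos[OF M] 5 by auto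
    then show ?thesis
      by (intro in_plane[OF geom_rep_nf_not_last[OF N 5(1)]]) (auto intro!: root_image_case_pos)
  qed
qed

end

end

section \<open>Positivity of the images of simple roots\<close>

context coxeter_sys
begin

definition nonneg_vec :: "(nat \<Rightarrow> real) \<Rightarrow> bool" where
  "nonneg_vec x \<longleftrightarrow> (\<forall>t<n. 0 \<le> x t)"

text \<open>Given a right descent \<open>s\<^sub>k\<close> of \<open>w\<close>, write \<open>w = x y\<close> with \<open>y \<in> W\<^sub>i\<^sub>k\<close> and lengths adding up,
  choosing \<open>x\<close> of minimal length; then \<open>x\<close> is shorter than \<open>w\<close> and has no right descent in
  \<open>{s\<^sub>i, s\<^sub>k}\<close> (otherwise that generator could be moved into the \<open>W\<^sub>i\<^sub>k\<close> factor).\<close>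
lemma parabolic_factorization:
  assumes w: "w \<in> carrier G" and ik: "i < n" "k < n" "i \<noteq> k"
    and desc: "cox_length (w \<otimes> s k) < cox_length w"
  shows "\<exists>x y. x \<in> carrier G \<and> y \<in> dihedral_sub i k \<and> w = x \<otimes> y \<and>
           cox_length w = cox_length x + dihedral_length i k y \<and> cox_length x < cox_length w \<and>
           (\<forall>a\<in>{i, k}. cox_length x < cox_length (x \<otimes> s a))"
proof -
  define A where "A = {x \<in> carrier G. \<exists>y \<in> dihedral_sub i k. w = x \<otimes> y \<and>
                          cox_length w = cox_length x + dihedral_length i k y}"
  have "w \<otimes> s k \<in> A"
  proof -
    have "cox_length w = cox_length (w \<otimes> s k) + 1"
      using cox_length_mult_gen[OF w ik(2)] desc by simp
    then show ?thesis
      unfolding A_def using gen_dihedral_sub[OF ik] dihedral_length_gen[OF ik] w ik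
      by (auto intro!: bexI[of _ "s k"])
  qed
  then obtain x where xA: "x \<in> A" and xmin: "\<forall>x'. x' \<in> A \<longrightarrow> cox_length x \<le> cox_length x'"
    using ex_has_least_nat[of "\<lambda>x. x \<in> A" "w \<otimes> s k" cox_length] by blast
  obtain y where x: "x \<in> carrier G" and y: "y \<in> dihedral_sub i k" and wxy: "w = x \<otimes> y"
    and lw: "cox_length w = cox_length x + dihedral_length i k y"
    using xA unfolding A_def by blast
  have yc: "y \<in> carrier G" using dihedral_sub_closed[OF ik y] .
  have "cox_length x < cox_length w" using xmin \<open>w \<otimes> s k \<in> A\<close> desc by fastforce
  moreover have "cox_length x < cox_length (x \<otimes> s a)" if a: "a \<in> {i, k}" for a
  proof (rule ccontr)
    assume "\<not> cox_length x < cox_length (x \<otimes> s a)"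
    moreover have an: "a < n" using a ik by auto
    ultimately have shorter: "cox_length x = Suc (cox_length (x \<otimes> s a))"
      using cox_length_mult_gen[OF x] by fastforce
    have ya: "s a \<otimes> y \<in> dihedral_sub i k" using dihedral_sub_mult_left[OF ik y a] .
    have w_split: "w = (x \<otimes> s a) \<otimes> (s a \<otimes> y)" using wxy x yc an by (simp add: m_assoc)
    have "cox_length w \<le> cox_length (x \<otimes> s a) + cox_length (s a \<otimes> y)"
      using w_split cox_length_mult x an yc by simp
    also have "\<dots> \<le> cox_length (x \<otimes> s a) + dihedral_length i k (s a \<otimes> y)"
      using cox_length_le_dihedral_length[OF ik ya] by simp
    finally have "cox_length w \<le> cox_length (x \<otimes> s a) + dihedral_length i k (s a \<otimes> y)" .
    then have "cox_length w = cox_length (x \<otimes> s a) + dihedral_length i k (s a \<otimes> y)"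
      using shorter lw dihedral_length_mult_left[OF ik y a] by linarith
    then have "x \<otimes> s a \<in> A" unfolding A_def using w_split ya x an by auto
    then show False using xmin shorter by fastforce
  qed
  ultimately show ?thesis using x y wxy lw by blast
qed

lemma dihedral_length_ascent:
  assumes ik: "i < n" "k < n" "i \<noteq> k" and x: "x \<in> carrier G" and y: "y \<in> dihedral_sub i k"
    and lw: "cox_length (x \<otimes> y) = cox_length x + dihedral_length i k y"
    and asc: "cox_length (x \<otimes> y) < cox_length (x \<otimes> y \<otimes> s i)"
  shows "dihedral_length i k y < dihedral_length i k (y \<otimes> s i)"
proof -
  have yc: "y \<in> carrier G" using dihedral_sub_closed[OF ik y] .
  have ysi: "y \<otimes> s i \<in> dihedral_sub i k" using dihedral_sub_mult_right[OF ik y] by simp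
  have "even (dihedral_length i k (y \<otimes> s i)) \<noteq> even (dihedral_length i k y)"
    using dihedral_length_parity[OF ik ysi] dihedral_length_parity[OF ik y]
      cox_length_parity_gen[OF yc ik(1)] by simp
  then have "dihedral_length i k (y \<otimes> s i) \<noteq> dihedral_length i k y" by auto
  moreover have "\<not> dihedral_length i k (y \<otimes> s i) < dihedral_length i k y"
  proof
    assume "dihedral_length i k (y \<otimes> s i) < dihedral_length i k y"
    moreover have "cox_length (x \<otimes> y \<otimes> s i) \<le> cox_length x + cox_length (y \<otimes> s i)"
      using cox_length_mult x yc ik by (simp add: m_assoc)
    moreover have "cox_length (y \<otimes> s i) \<le> dihedral_length i k (y \<otimes> s i)"
      using cox_length_le_dihedral_length[OF ik ysi] .
    ultimately show False using lw asc by linarith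
  qed
  ultimately show ?thesis by linarith
qed

theorem geom_rep_root_nonneg:
  "w \<in> carrier G \<Longrightarrow> i < n \<Longrightarrow> cox_length w < cox_length (w \<otimes> s i) \<Longrightarrow>
     nonneg_vec (geom_rep w (root i))"
proof (induction "cox_length w" arbitrary: w i rule: less_induct)
  case less
  note w = less.prems(1) and i = less.prems(2) and asc = less.prems(3)
  show ?case
  proof (cases "cox_length w = 0")
    case True
    then show ?thesis
      using cox_length_zero[OF w] geom_rep_one unfolding nonneg_vec_def by (simp add: root_def)
  next
    case False
    then obtain k where k: "k < n" "cox_length (w \<otimes> s k) < cox_length w"
      using right_descent_exists w by blast
    have ik: "i < n" "k < n" "i \<noteq> k" using i k asc by auto
    obtain x y where x: "x \<in> carrier G" and y: "y \<in> dihedral_sub i k" and wxy: "w = x \<otimes> y"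
      and lw: "cox_length w = cox_length x + dihedral_length i k y"
      and shorter: "cox_length x < cox_length w"
      and x_asc: "\<forall>a\<in>{i, k}. cox_length x < cox_length (x \<otimes> s a)"
      using parabolic_factorization[OF w ik k(2)] by blast
    have IH: "nonneg_vec (geom_rep x (root a))" if "a \<in> {i, k}" for a
      using less.hyps[OF shorter x _ bspec[OF x_asc that]] that ik by auto
    obtain c d where cd: "0 \<le> c" "0 \<le> d" "geom_rep y (root i) = (\<lambda>t. c * root i t + d * root k t)"
      using dihedral_root_nonneg[OF ik y dihedral_length_ascent[OF ik x y]] wxy lw asc by blast
    have "geom_rep w (root i) = (\<lambda>t. c * geom_rep x (root i) t + d * geom_rep x (root k) t)"
      using wxy geom_rep_mult[OF x dihedral_sub_closed[OF ik y]] cd(3) geom_rep_lin[OF x] by simp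
    then show ?thesis using IH cd unfolding nonneg_vec_def by simp
  qed
qed

lemma geom_rep_root_nonpos:
  assumes w: "w \<in> carrier G" and i: "i < n" and desc: "cox_length (w \<otimes> s i) < cox_length w"
  shows "\<forall>t<n. geom_rep w (root i) t \<le> 0"
proof -
  have ws: "w \<otimes> s i \<in> carrier G" using w i by simp
  have "nonneg_vec (geom_rep (w \<otimes> s i) (root i))"
    using geom_rep_root_nonneg[OF ws i] desc w i by simp
  moreover have "geom_rep w (root i) = (\<lambda>t. - geom_rep (w \<otimes> s i) (root i) t)"
  proof -
    have "geom_rep w (root i) = geom_rep (w \<otimes> s i \<otimes> s i) (root i)" using w i by simp
    also have "\<dots> = geom_rep (w \<otimes> s i) (reflection i (root i))"
      using geom_rep_mult[OF ws] geom_rep_gen i by simp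
    finally show ?thesis using reflection_root_self[OF i] geom_rep_neg[OF ws] by simp
  qed
  ultimately show ?thesis unfolding nonneg_vec_def by simp
qed

end

section \<open>Transporting the points \<open>v\<^sub>i\<close>\<close>

context coxeter_sys
begin

lemma ascent_of_positive_coordinate:
  assumes w: "w \<in> carrier G" and i: "i < n" and t: "t < n" and pos: "0 < geom_rep w (root i) t"
  shows "cox_length w < cox_length (w \<otimes> s i)"
  using geom_rep_root_nonpos[OF w i] cox_length_mult_gen[OF w i] t pos
  by (metis leD lessI not_less_iff_gr_or_eq)

text \<open>The images of two distinct simple roots under \<open>x\<close>, if nonnegative, cannot have a
  positive combination on the line of a single simple root \<open>\<alpha>\<^sub>j\<close>: it would force both images
  onto that line, hence proportional, contradicting injectivity of \<open>geom_rep x\<close>.\<close>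
lemma no_positive_combination_on_root_line:
  assumes x: "x \<in> carrier G" and ik: "i < n" "k < n" "i \<noteq> k"
    and X: "nonneg_vec (geom_rep x (root i))" and Y: "nonneg_vec (geom_rep x (root k))"
    and cd: "0 < c" "0 < d"
    and line: "(\<lambda>t. c * geom_rep x (root i) t + d * geom_rep x (root k) t) = (\<lambda>t. lam * root j t)"
  shows False
proof -
  define X where "X = geom_rep x (root i)"
  define Y where "Y = geom_rep x (root k)"
  have off_line: "X t = 0 \<and> Y t = 0" if "t \<noteq> j" for t
  proof (cases "t < n")
    case True
    have "0 \<le> X t" "0 \<le> Y t" using X Y True unfolding nonneg_vec_def X_def Y_def by auto
    moreover have "c * X t + d * Y t = 0"
      using fun_cong[OF line, of t] that unfolding X_def Y_def by (simp add: root_def)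
    ultimately show ?thesis using cd
      by (smt (verit) mult_nonneg_nonneg mult_pos_pos zero_less_mult_iff)
  next
    case False
    then show ?thesis unfolding X_def Y_def using geom_rep_outside[OF x] ik by (simp add: root_def)
  qed
  have Xe: "X = (\<lambda>t. X j * root j t)" and Ye: "Y = (\<lambda>t. Y j * root j t)"
    using off_line by (auto simp: fun_eq_iff root_def)
  have Xj: "X j \<noteq> 0" using geom_rep_root_nonzero[OF x] Xe X_def by force
  have "geom_rep x (\<lambda>t. Y j * root i t + (- X j) * root k t) = (\<lambda>t. Y j * X t + (- X j) * Y t)"
    unfolding X_def Y_def by (rule geom_rep_lin[OF x])
  also have "\<dots> = geom_rep x (\<lambda>t. 0)"
    using geom_rep_zero[OF x] by (subst Xe, subst Ye) (simp add: algebra_simps)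
  finally have "(\<lambda>t. Y j * root i t + (- X j) * root k t) = (\<lambda>t. 0)"
    using geom_rep_inj[OF x] by blast
  then have "Y j * root i k + (- X j) * root k k = 0" by metis
  then show False using Xj ik by (simp add: root_def)
qed

text \<open>If \<open>w s\<^sub>i w\<^sup>-\<^sup>1 = s\<^sub>j\<close>, then \<open>w\<close> maps \<open>\<alpha>\<^sub>i\<close> onto the line of \<open>\<alpha>\<^sub>j\<close>: from
  \<open>\<sigma>\<^sub>j (w \<alpha>\<^sub>i) = w \<sigma>\<^sub>i \<alpha>\<^sub>i = - w \<alpha>\<^sub>i\<close>.\<close>
lemma conjugate_gen_root:
  assumes w: "w \<in> carrier G" and i: "i < n" and j: "j < n" and conj: "w \<otimes> s i \<otimes> inv w = s j"
  shows "\<exists>lam. lam \<noteq> 0 \<and> geom_rep w (root i) = (\<lambda>t. lam * root j t)"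
proof -
  have comm: "w \<otimes> s i = s j \<otimes> w"
  proof -
    have "w \<otimes> s i = w \<otimes> s i \<otimes> inv w \<otimes> w" using w i by (simp add: m_assoc)
    then show ?thesis using conj by simp
  qed
  define Y where "Y = geom_rep w (root i)"
  have "(\<lambda>t. - Y t) = geom_rep w (reflection i (root i))"
    using reflection_root_self[OF i] geom_rep_neg[OF w] Y_def by simp
  also have "\<dots> = geom_rep (w \<otimes> s i) (root i)" using geom_rep_mult[OF w] geom_rep_gen i by simp
  also have "\<dots> = reflection j Y" using comm geom_rep_mult[OF _ w] geom_rep_gen j Y_def by simp
  finally have "(\<lambda>t. - Y t) = (\<lambda>t. Y t - 2 * bform j Y * root j t)" unfolding reflection_def .
  then have "Y = (\<lambda>t. bform j Y * root j t)" by (auto simp: fun_eq_iff dest: fun_cong)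
  moreover have "Y \<noteq> (\<lambda>t. 0)" using geom_rep_root_nonzero[OF w] Y_def by simp
  ultimately show ?thesis unfolding Y_def by (metis mult_zero_left)
qed

context
  fixes S :: "'b set" and \<phi> :: "'a \<Rightarrow> 'b \<Rightarrow> 'b" and v :: "nat \<Rightarrow> 'b"
  assumes act: "group_action G S \<phi>"
    and vS: "\<forall>i<n. v i \<in> S"
    and c1: "\<forall>i<n. \<forall>j<n. \<forall>k. m i j = 2 * k + 1 \<longrightarrow>
               \<phi> (word_eval G s (alt_word i j (2 * k))) (v i) = v j"
    and c2: "\<forall>i<n. \<forall>j<n. \<forall>k. m i j = 2 * k \<longrightarrow>
               \<phi> (word_eval G s (alt_word i j (2 * k - 1))) (v j) = v j"
begin

lemma action_mult: "x \<in> S \<Longrightarrow> g \<in> carrier G \<Longrightarrow> h \<in> carrier G \<Longrightarrow> \<phi> (g \<otimes> h) x = \<phi> g (\<phi> h x)"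
  using group_action.composition_rule[OF act] by blast

lemma action_one: "x \<in> S \<Longrightarrow> \<phi> \<one> x = x"
  using group_action.id_eq_one[OF act] by (metis restrict_apply')

lemma dihedral_fixes_vertex:
  assumes ik: "i < n" "k < n"
    and u: "u = \<one> \<or> (even (m i k) \<and> u = word_eval G s (alt_word k i (m i k - 1)))"
  shows "\<phi> u (v i) = v i"
proof (cases "u = \<one>")
  case True
  then show ?thesis using action_one vS ik by simp
next
  case False
  then have "m k i = 2 * (m i k div 2)" and ue: "u = word_eval G s (alt_word k i (2 * (m i k div 2) - 1))"
    using u m_sym ik by auto
  then show ?thesis using c2 ik by blast
qed

lemma dihedral_moves_vertex:
  assumes ik: "i < n" "k < n"
    and u: "odd (m i k)" "u = word_eval G s (alt_word i k (m i k - 1))"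
  shows "\<phi> u (v i) = v k"
proof -
  have "m i k = 2 * (m i k div 2) + 1" and "u = word_eval G s (alt_word i k (2 * (m i k div 2)))"
    using u by (simp_all add: odd_two_times_div_two_nat)
  then show ?thesis using c1 ik by blast
qed

text \<open>Write
  \<open>w = x u\<close> as in \<open>parabolic_factorization\<close>; by positivity and the classification of
  \<open>u \<alpha>\<^sub>i\<close>, the element \<open>u\<close> sends \<open>\<alpha>\<^sub>i\<close> to \<open>\<alpha>\<^sub>i\<close> or \<open>\<alpha>\<^sub>k\<close>, and then \<open>x\<close> is shorter.\<close>
theorem vertex_transport:
  "w \<in> carrier G \<Longrightarrow> i < n \<Longrightarrow> j < n \<Longrightarrow> 0 < lam \<Longrightarrow>
     geom_rep w (root i) = (\<lambda>t. lam * root j t) \<Longrightarrow> \<phi> w (v i) = v j"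
proof (induction "cox_length w" arbitrary: w i j lam rule: less_induct)
  case less
  note w = less.prems(1) and i = less.prems(2) and j = less.prems(3) and lam = less.prems(4)
    and image = less.prems(5)
  show ?case
  proof (cases "cox_length w = 0")
    case True
    then have w1: "w = \<one>" using cox_length_zero w by blast
    then have "root i i = lam * root j i" using image geom_rep_one by metis
    then have "i = j" using lam by (auto simp: root_def split: if_splits)
    then show ?thesis using w1 action_one vS i by simp
  next
    case False
    then obtain k where k: "k < n" "cox_length (w \<otimes> s k) < cox_length w"
      using right_descent_exists w by blast
    have "cox_length w < cox_length (w \<otimes> s i)"
      using ascent_of_positive_coordinate[OF w i j] image lam by (simp add: root_def)
    then have ik: "i < n" "k < n" "i \<noteq> k" using i k by auto
    obtain x u where x: "x \<in> carrier G" and u: "u \<in> dihedral_sub i k" and wxu: "w = x \<otimes> u"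
      and shorter: "cox_length x < cox_length w"
      and x_asc: "\<forall>a\<in>{i, k}. cox_length x < cox_length (x \<otimes> s a)"
      using parabolic_factorization[OF w ik k(2)] by blast
    have uc: "u \<in> carrier G" using dihedral_sub_closed[OF ik u] .
    have X: "nonneg_vec (geom_rep x (root i))" and Y: "nonneg_vec (geom_rep x (root k))"
      using geom_rep_root_nonneg[OF x] x_asc ik by auto
    obtain c d where cd: "geom_rep u (root i) = (\<lambda>t. c * root i t + d * root k t)"
      and case_cd: "root_image_case i k u c d"
      using dihedral_root_image[OF ik u] by blast
    have line: "(\<lambda>t. c * geom_rep x (root i) t + d * geom_rep x (root k) t) = (\<lambda>t. lam * root j t)"
      using image wxu geom_rep_mult[OF x uc] cd geom_rep_lin[OF x] by simp
    have split: "\<phi> w (v i) = \<phi> x (\<phi> u (v i))" using action_mult vS i x uc wxu by simp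
    consider (nonpos) "c \<le> 0" "d \<le> 0" | (pos) "0 < c" "0 < d"
      | (fixed) "c = 1" "d = 0" "u = \<one> \<or> (even (m i k) \<and> u = word_eval G s (alt_word k i (m i k - 1)))"
      | (moved) "c = 0" "d = 1" "odd (m i k)" "u = word_eval G s (alt_word i k (m i k - 1))"
      using case_cd unfolding root_image_case_def[OF ik] by blast
    then show ?thesis
    proof cases
      case nonpos
      moreover have "0 \<le> geom_rep x (root i) j" "0 \<le> geom_rep x (root k) j"
        using X Y j unfolding nonneg_vec_def by auto
      ultimately have "c * geom_rep x (root i) j + d * geom_rep x (root k) j \<le> 0"
        by (simp add: mult_nonpos_nonneg add_nonpos_nonpos)
      then show ?thesis using fun_cong[OF line, of j] lam by (simp add: root_def)
    next
      case pos
      then show ?thesis using no_positive_combination_on_root_line[OF x ik X Y _ _ line] by simp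
    next
      case fixed
      then have "\<phi> x (v i) = v j" using less.hyps[OF shorter x i j lam] line by simp
      then show ?thesis using split dihedral_fixes_vertex[OF i k(1) fixed(3)] by simp
    next
      case moved
      then have "\<phi> x (v k) = v j" using less.hyps[OF shorter x k(1) j lam] line by simp
      then show ?thesis using split dihedral_moves_vertex[OF i k(1) moved(3,4)] by simp
    qed
  qed
qed

text \<open>The statement of the theorem, inside the locale.  For a negative multiple we pass to
  \<open>s\<^sub>j w\<close>, and hypothesis (4) undoes the extra \<open>s\<^sub>j\<close>.\<close>
theorem conjugate_gen_vertex:
  assumes c4: "\<forall>i<n. \<phi> (s i) (v i) = v i"
    and w: "w \<in> carrier G" and i: "i < n" and j: "j < n" and conj: "w \<otimes> s i \<otimes> inv w = s j"
  shows "\<phi> w (v i) = v j"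
proof -
  obtain lam where lam: "lam \<noteq> 0" and image: "geom_rep w (root i) = (\<lambda>t. lam * root j t)"
    using conjugate_gen_root[OF w i j conj] by blast
  show ?thesis
  proof (cases "0 < lam")
    case True
    then show ?thesis using vertex_transport[OF w i j _ image] by simp
  next
    case False
    have sw: "s j \<otimes> w \<in> carrier G" using w j by simp
    have "geom_rep (s j \<otimes> w) (root i) = reflection j (\<lambda>t. lam * root j t)"
      using geom_rep_mult[OF _ w] geom_rep_gen j image by simp
    also have "\<dots> = (\<lambda>t. (- lam) * root j t)"
      using reflection_lin[of j lam "root j" 0 "root j"] reflection_root_self[OF j] by simp
    finally have "\<phi> (s j \<otimes> w) (v i) = v j"
      using vertex_transport[OF sw i j] False lam by (metis neg_0_less_iff_less not_less_iff_gr_or_eq)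
    then show ?thesis
      using action_mult[of "v i" "s j" "s j \<otimes> w"] vS i j w c4 by simp
  qed
qed

end

end

theorem lemma8p1:
  fixes G :: "('a, 'c) monoid_scheme" and n :: nat and m :: "nat \<Rightarrow> nat \<Rightarrow> nat"
    and s :: "nat \<Rightarrow> 'a" and S :: "'b set" and \<phi> :: "'a \<Rightarrow> 'b \<Rightarrow> 'b" and v :: "nat \<Rightarrow> 'b"
  assumes cox: "coxeter_system G n m s"
    and fin: "finite (carrier G)"
    and act: "group_action G S \<phi>"
    and vS: "\<forall>i<n. v i \<in> S"
    and c1: "\<forall>i<n. \<forall>j<n. \<forall>k. m i j = 2 * k + 1 \<longrightarrow>
               \<phi> (word_eval G s (alt_word i j (2 * k))) (v i) = v j"
    and c2: "\<forall>i<n. \<forall>j<n. \<forall>k. m i j = 2 * k \<longrightarrow>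
               \<phi> (word_eval G s (alt_word i j (2 * k - 1))) (v j) = v j"
    and c3: "\<forall>i<n. \<forall>j<n. m i j = 2 \<longrightarrow> \<phi> (s i) (v j) = v j"
    and c4: "\<forall>i<n. \<phi> (s i) (v i) = v i"
  shows "\<forall>w \<in> carrier G. \<forall>i<n. \<forall>j<n.
           w \<otimes>\<^bsub>G\<^esub> s i \<otimes>\<^bsub>G\<^esub> inv\<^bsub>G\<^esub> w = s j \<longrightarrow> \<phi> w (v i) = v j"
proof -
  interpret coxeter_sys G n m s by (rule coxeter_sys.intro[OF cox])
  show ?thesis using conjugate_gen_vertex[OF act vS c1 c2 c4] by blast
qed

end
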